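(* Let $s\in(\frac12,1)$, $N\ge2$, and let $\Gamma_1,\Gamma_2,\Omega,U$, $L$ and $C^+$ be as in the context. Then $U(x+y)\ge U(x)$ for all $x\in\mathbb R^N$ and all $y\in C^+$.
   Context: Notation: $S^{N-1}$ unit sphere. $\phi\in C^{1,1}(x_0)$ means there are $p\in\mathbb R^N$, $M,\eta_0>0$ with $|\phi(x_0+x)-\phi(x_0)-p\cdot x|\le M|x|^2$ for $|x|<\eta_0$; $\nabla\phi(x_0):=p$. Infinity fractional Laplacian: if $\nabla\phi(x)\ne0$, $v=\nabla\phi(x)/|\nabla\phi(x)|$, $\Delta^s_\infty\phi(x)=\int_0^\infty\frac{\phi(x+\eta v)+\phi(x-\eta v)-2\phi(x)}{\eta^{1+2s}}d\eta$; if $\nabla\phi(x)=0$, $\Delta^s_\infty\phi(x)=\sup_{y\in S^{N-1}}\int_0^\infty\frac{\phi(x+\eta y)-\phi(x)}{\eta^{1+2s}}d\eta+\inf_{z\in S^{N-1}}\int_0^\infty\frac{\phi(x-\eta z)-\phi(x)}{\eta^{1+2s}}d\eta$. An upper semicontinuous $u$ is a subsolution at $x_0$ if whenever $r>0$, $\phi\in C^{1,1}(x_0)\cap C(\overline{B_r(x_0)})$, $\phi(x_0)=u(x_0)$, $\phi>u$ on $B_r(x_0)\setminus\{x_0\}$, the function $\tilde u$ equal to $\phi$ on $B_r(x_0)$ and $u$ elsewhere satisfies $\Delta^s_\infty\tilde u(x_0)\ge0$. Setting: $x=(x_1,\hat x)$, $\hat x\in\mathbb R^{N-1}$; $\Gamma_1,\Gamma_2:\mathbb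 R^{N-1}\to\mathbb R$ are $C^{1,1}$ with $0\le\Gamma_1\le\Gamma_2\le M$, $\Gamma_2-\Gamma_1\ge m$ for constants $M>m>0$, and $\sup_{\hat x}|\partial_k\Gamma_i|+|\partial_l\partial_k\Gamma_i|\le C_1$ for all $i,k,l$. $L$ is a common Lipschitz constant of $\Gamma_1,\Gamma_2$, $\theta=\operatorname{arccot}(L)\in(0,\pi/2)$, $C^+=\{x\ne0:\cos\theta<x\cdot e_1/|x|\le1\}$. $\Omega=\{\Gamma_1(\hat x)<x_1<\Gamma_2(\hat x)\}$, $\Omega^{c,-}=\{x_1\le\Gamma_1(\hat x)\}$, $\Omega^{c,+}=\{x_1\ge\Gamma_2(\hat x)\}$. $\mathcal F$ is the set of upper semicontinuous $u:\mathbb R^N\to\mathbb R$, continuous in $\Omega$, that are subsolutions at every point of $\Omega$ and satisfy $u\le0$ on $\Omega^{c,-}$, $u\le1$ on $\Omega\cup\Omega^{c,+}$; $U=\sup_{u\in\mathcal F}u$ pointwise. *)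

theory Defs
  imports "HOL-Analysis.Analysis"
begin

text \<open>Points of R^N are written as pairs (x1, xhat) with xhat :: real^'m,
  so N = 1 + CARD('m) \<ge> 2. The Euclidean structure of the product type is the
  standard one of R^N; e1 corresponds to (1,0), so x . e1 = fst x.\<close>

definition usc :: "('a::topological_space \<Rightarrow> real) \<Rightarrow> bool" where
  "usc u \<longleftrightarrow> (\<forall>x t. u x < t \<longrightarrow> eventually (\<lambda>y. u y < t) (at x))"

definition C11_at :: "('a::real_inner \<Rightarrow> real) \<Rightarrow> 'a \<Rightarrow> 'a \<Rightarrow> bool" where
  "C11_at \<phi> x0 p \<longleftrightarrow> (\<exists>M \<eta>0. M > 0 \<and> \<eta>0 > 0 \<and>
      (\<forall>x. norm x < \<eta>0 \<longrightarrow> \<bar>\<phi> (x0 + x) - \<phi> x0 - inner p x\<bar> \<le> M * (norm x)\<^sup>2))"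

definition ext_int :: "(real \<Rightarrow> real) \<Rightarrow> ereal" where
  "ext_int f = enn2ereal (\<integral>\<^sup>+ \<eta>\<in>{0<..}. ennreal (max (f \<eta>) 0) \<partial>lborel)
             - enn2ereal (\<integral>\<^sup>+ \<eta>\<in>{0<..}. ennreal (max (- f \<eta>) 0) \<partial>lborel)"

text \<open>Infinity fractional Laplacian at x, where p is the gradient nabla phi(x).\<close>
definition finf_lap :: "real \<Rightarrow> ('a::real_inner \<Rightarrow> real) \<Rightarrow> 'a \<Rightarrow> 'a \<Rightarrow> ereal" where
  "finf_lap s \<phi> x p =
     (if p \<noteq> 0 then
        (let v = p /\<^sub>R norm p in
          ext_int (\<lambda>\<eta>. (\<phi> (x + \<eta> *\<^sub>R v) + \<phi> (x - \<eta> *\<^sub>R v) - 2 * \<phi> x) / \<eta> powr (1 + 2 * s)))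
      else
        (SUP y\<in>sphere 0 1. ext_int (\<lambda>\<eta>. (\<phi> (x + \<eta> *\<^sub>R y) - \<phi> x) / \<eta> powr (1 + 2 * s)))
        + (INF z\<in>sphere 0 1. ext_int (\<lambda>\<eta>. (\<phi> (x - \<eta> *\<^sub>R z) - \<phi> x) / \<eta> powr (1 + 2 * s))))"

definition subsol_at :: "real \<Rightarrow> ('a::real_inner \<Rightarrow> real) \<Rightarrow> 'a \<Rightarrow> bool" where
  "subsol_at s u x0 \<longleftrightarrow>
     (\<forall>r \<phi> p. r > 0 \<longrightarrow> C11_at \<phi> x0 p \<longrightarrow> continuous_on (cball x0 r) \<phi> \<longrightarrow>
        \<phi> x0 = u x0 \<longrightarrow> (\<forall>x\<in>ball x0 r - {x0}. \<phi> x > u x) \<longrightarrow>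
        finf_lap s (\<lambda>x. if x \<in> ball x0 r then \<phi> x else u x) x0 p \<ge> 0)"

definition Omega :: "(real^'m::finite \<Rightarrow> real) \<Rightarrow> (real^'m \<Rightarrow> real) \<Rightarrow> (real \<times> (real^'m)) set" where
  "Omega \<Gamma>1 \<Gamma>2 = {x. \<Gamma>1 (snd x) < fst x \<and> fst x < \<Gamma>2 (snd x)}"

text \<open>The family F (note Omega union Omega^{c,+} = {x1 > Gamma1(xhat)} since Gamma1 \<le> Gamma2).\<close>
definition famF :: "real \<Rightarrow> (real^'m::finite \<Rightarrow> real) \<Rightarrow> (real^'m \<Rightarrow> real) \<Rightarrow> (real \<times> (real^'m) \<Rightarrow> real) set" where
  "famF s \<Gamma>1 \<Gamma>2 = {u. usc u \<and> continuous_on (Omega \<Gamma>1 \<Gamma>2) u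
      \<and> (\<forall>x\<in>Omega \<Gamma>1 \<Gamma>2. subsol_at s u x)
      \<and> (\<forall>x. fst x \<le> \<Gamma>1 (snd x) \<longrightarrow> u x \<le> 0)
      \<and> (\<forall>x. x \<in> Omega \<Gamma>1 \<Gamma>2 \<or> fst x \<ge> \<Gamma>2 (snd x) \<longrightarrow> u x \<le> 1)}"

definition Uf :: "real \<Rightarrow> (real^'m::finite \<Rightarrow> real) \<Rightarrow> (real^'m \<Rightarrow> real) \<Rightarrow> real \<times> (real^'m) \<Rightarrow> real" where
  "Uf s \<Gamma>1 \<Gamma>2 x = (SUP u\<in>famF s \<Gamma>1 \<Gamma>2. u x)"

text \<open>arccot on (0,infinity) with values in (0, pi/2).\<close>
definition arccot :: "real \<Rightarrow> real" where
  "arccot L = pi / 2 - arctan L"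

definition Cplus :: "real \<Rightarrow> (real \<times> (real^'m::finite)) set" where
  "Cplus L = {y. y \<noteq> 0 \<and> cos (arccot L) < fst y / norm y \<and> fst y / norm y \<le> 1}"

end

theory Submission
  imports Defs
begin

text \<open>If \<open>u \<in> \<F>\<close> and \<open>y \<in> C\<^sup>+\<close>, then \<open>z \<mapsto> max (u (z - y)) 0\<close> is again in \<open>\<F>\<close>: a cone of
  aperture \<open>arccot L\<close> keeps translates of the region below an \<open>L\<close>-Lipschitz graph strictly
  below it, so translating preserves the boundary conditions, while subsolutions are stable
  under translation and under taking the maximum with the constant \<open>0\<close>. Evaluating at
  \<open>x + y\<close> and taking suprema gives \<open>U (x + y) \<ge> U x\<close>.\<close>

lemma ext_int_mono:
  assumes "\<And>\<eta>. f \<eta> \<le> g \<eta>" shows "ext_int f \<le> ext_int g"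
  unfolding ext_int_def
proof (rule ereal_minus_mono)
  show "enn2ereal (\<integral>\<^sup>+ \<eta>\<in>{0<..}. ennreal (max (f \<eta>) 0) \<partial>lborel)
     \<le> enn2ereal (\<integral>\<^sup>+ \<eta>\<in>{0<..}. ennreal (max (g \<eta>) 0) \<partial>lborel)"
    unfolding less_eq_ennreal.rep_eq[symmetric]
    by (intro nn_integral_mono mult_right_mono ennreal_leI) (rule max.mono[OF assms order_refl], simp)
  show "enn2ereal (\<integral>\<^sup>+ \<eta>\<in>{0<..}. ennreal (max (- g \<eta>) 0) \<partial>lborel)
     \<le> enn2ereal (\<integral>\<^sup>+ \<eta>\<in>{0<..}. ennreal (max (- f \<eta>) 0) \<partial>lborel)"
    unfolding less_eq_ennreal.rep_eq[symmetric]
    by (intro nn_integral_mono mult_right_mono ennreal_leI)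
      (rule max.mono[OF _ order_refl], simp add: assms, simp)
qed

lemma ext_int_nonneg: "(\<And>\<eta>. 0 \<le> f \<eta>) \<Longrightarrow> 0 \<le> ext_int f"
  using ext_int_mono[of "\<lambda>_. 0" f] by (simp add: ext_int_def)

lemma finf_lap_mono:
  assumes "\<And>z. f z \<le> g z" "f x = g x"
  shows "finf_lap s f x p \<le> finf_lap s g x p"
  unfolding finf_lap_def Let_def
  by (auto intro!: add_mono SUP_mono' INF_mono' ext_int_mono divide_right_mono diff_right_mono
      simp: assms)

lemma finf_lap_nonneg_at_min:
  fixes f :: "'a::{real_inner, perfect_space} \<Rightarrow> real"
  assumes min: "\<And>z. f x \<le> f z"
  shows "0 \<le> finf_lap s f x p"
proof (cases "p = 0")
  case True
  obtain y0 :: 'a where y0: "y0 \<in> sphere 0 1"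
    using sphere_eq_empty[of "0::'a" 1] by fastforce
  have "0 \<le> (SUP y\<in>sphere 0 1. ext_int (\<lambda>\<eta>. (f (x + \<eta> *\<^sub>R y) - f x) / \<eta> powr (1 + 2 * s)))"
    by (rule SUP_upper2[OF y0], rule ext_int_nonneg) (use min in auto)
  moreover have "0 \<le> (INF z\<in>sphere 0 1. ext_int (\<lambda>\<eta>. (f (x - \<eta> *\<^sub>R z) - f x) / \<eta> powr (1 + 2 * s)))"
    by (rule INF_greatest, rule ext_int_nonneg) (use min in auto)
  ultimately show ?thesis unfolding finf_lap_def using True by simp
next
  case False
  have "0 \<le> f (x + a) + f (x - b) - 2 * f x" for a b
    using min[of "x + a"] min[of "x - b"] by linarith
  then show ?thesis unfolding finf_lap_def Let_def using False
    by (auto intro!: ext_int_nonneg divide_nonneg_nonneg)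
qed

lemma finf_lap_translate:
  "finf_lap s (\<lambda>z. h (z + y)) x p = finf_lap s h (x + y) p"
  unfolding finf_lap_def Let_def by (simp add: algebra_simps)

lemma C11_at_translate: "C11_at \<phi> x0 p \<Longrightarrow> C11_at (\<lambda>z. \<phi> (z + y)) (x0 - y) p"
  unfolding C11_at_def by (simp add: algebra_simps)

lemma subsol_at_translate:
  fixes u :: "'a::real_inner \<Rightarrow> real"
  assumes sub: "subsol_at s u (x0 - y)"
  shows "subsol_at s (\<lambda>z. u (z - y)) x0"
  unfolding subsol_at_def
proof (intro allI impI)
  fix r \<phi> p
  assume r: "0 < r" and C: "C11_at \<phi> x0 p" and cont: "continuous_on (cball x0 r) \<phi>"
    and touch: "\<phi> x0 = u (x0 - y)" and above: "\<forall>z\<in>ball x0 r - {x0}. u (z - y) < \<phi> z"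
  define W where "W = (\<lambda>v. if v \<in> ball x0 r then \<phi> v else u (v - y))"
  have ball_tr: "z + y \<in> ball x0 r \<longleftrightarrow> z \<in> ball (x0 - y) r" for z
    by (simp add: dist_norm algebra_simps)
  have "continuous_on (cball (x0 - y) r) (\<lambda>z. \<phi> (z + y))"
  proof (rule continuous_on_compose2[OF cont])
    show "(\<lambda>z. z + y) ` cball (x0 - y) r \<subseteq> cball x0 r"
      by (auto simp: dist_norm algebra_simps)
  qed (intro continuous_intros)
  moreover have "\<forall>z\<in>ball (x0 - y) r - {x0 - y}. u z < \<phi> (z + y)"
    using above ball_tr by (metis Diff_iff add_diff_cancel_right' singleton_iff)
  ultimately have "0 \<le> finf_lap s (\<lambda>z. if z \<in> ball (x0 - y) r then \<phi> (z + y) else u z) (x0 - y) p"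
    using sub r C11_at_translate[OF C, of y] touch unfolding subsol_at_def by simp
  also have "(\<lambda>z. if z \<in> ball (x0 - y) r then \<phi> (z + y) else u z) = (\<lambda>z. W (z + y))"
    using ball_tr by (auto simp: W_def)
  also have "finf_lap s (\<lambda>z. W (z + y)) (x0 - y) p = finf_lap s W x0 p"
    by (simp add: finf_lap_translate)
  finally show "0 \<le> finf_lap s W x0 p" .
qed

text \<open>Where \<open>u x0 \<le> c\<close>, every admissible test function makes the modified function attain its
  minimum at \<open>x0\<close>, so no subsolution property of \<open>u\<close> is needed there.\<close>

lemma subsol_at_max_const:
  fixes u :: "'a::{real_inner, perfect_space} \<Rightarrow> real"
  assumes sub: "c < u x0 \<Longrightarrow> subsol_at s u x0"
  shows "subsol_at s (\<lambda>z. max (u z) c) x0"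
  unfolding subsol_at_def
proof (intro allI impI)
  fix r \<phi> p
  assume r: "0 < r" and C: "C11_at \<phi> x0 p" and cont: "continuous_on (cball x0 r) \<phi>"
    and touch: "\<phi> x0 = max (u x0) c" and above: "\<forall>z\<in>ball x0 r - {x0}. max (u z) c < \<phi> z"
  define W where "W = (\<lambda>z. if z \<in> ball x0 r then \<phi> z else max (u z) c)"
  have W_ge: "max (u z) c \<le> W z" for z
    using above touch by (cases "z = x0") (auto simp: W_def less_imp_le)
  have W_x0: "W x0 = max (u x0) c" using r touch by (simp add: W_def)
  show "0 \<le> finf_lap s W x0 p"
  proof (cases "c < u x0")
    case True
    define V where "V = (\<lambda>z. if z \<in> ball x0 r then \<phi> z else u z)"
    have "\<phi> x0 = u x0" "\<forall>z\<in>ball x0 r - {x0}. u z < \<phi> z"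
      using touch True above by auto
    then have "0 \<le> finf_lap s V x0 p"
      using sub[OF True] r C cont unfolding subsol_at_def V_def by blast
    also have "\<dots> \<le> finf_lap s W x0 p"
      using W_x0 True r by (intro finf_lap_mono) (auto simp: V_def W_def)
    finally show ?thesis .
  next
    case False
    then have "W x0 \<le> W z" for z using W_ge[of z] W_x0 by simp
    then show ?thesis by (rule finf_lap_nonneg_at_min)
  qed
qed

lemma usc_translate:
  fixes u :: "'a::real_normed_vector \<Rightarrow> real"
  assumes "usc u" shows "usc (\<lambda>z. u (z - y))"
  unfolding usc_def
proof (intro allI impI)
  fix x t assume "u (x - y) < t"
  then have "eventually (\<lambda>v. u v < t) (at (x - y))" using assms unfolding usc_def by blast
  then show "eventually (\<lambda>v. u (v - y) < t) (at x)"
    unfolding filtermap_at_shift[symmetric] eventually_filtermap .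
qed

lemma usc_max_const: "usc u \<Longrightarrow> usc (\<lambda>z. max (u z) c)"
  unfolding usc_def by (auto elim: eventually_mono)

lemma isCont_max_const_of_usc:
  assumes "usc u" "u x \<le> c"
  shows "isCont (\<lambda>z. max (u z) c) x"
  unfolding isCont_def order_tendsto_iff
proof (intro conjI allI impI)
  fix a assume "a < max (u x) c"
  then show "eventually (\<lambda>z. a < max (u z) c) (at x)"
    using assms(2) by (simp add: less_max_iff_disj)
next
  fix a assume "max (u x) c < a"
  then have "eventually (\<lambda>z. u z < a) (at x)" "c < a"
    using assms unfolding usc_def by auto
  then show "eventually (\<lambda>z. max (u z) c < a) (at x)" by (auto elim: eventually_mono)
qed

lemma Cplus_fst_gt:
  fixes y :: "real \<times> (real^'m::finite)"
  assumes L: "0 < L" and y: "y \<in> Cplus L"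
  shows "L * norm (snd y) < fst y"
proof -
  have ny: "0 < norm y" and cone: "L / sqrt (1 + L\<^sup>2) < fst y / norm y"
    using y by (auto simp: Cplus_def arccot_def cos_sin_eq sin_arctan)
  have sq: "0 < sqrt (1 + L\<^sup>2)" by (simp add: add_pos_nonneg)
  have lt: "L * norm y < fst y * sqrt (1 + L\<^sup>2)"
    using cone ny sq by (simp add: field_simps)
  moreover have "0 < L * norm y" using L ny by simp
  ultimately have "0 < fst y * sqrt (1 + L\<^sup>2)" by linarith
  then have pos: "0 < fst y" using sq by (simp add: zero_less_mult_iff)
  have "(L * norm y)\<^sup>2 < (fst y * sqrt (1 + L\<^sup>2))\<^sup>2"
    using lt L ny by (intro power_strict_mono) auto
  moreover have "(norm y)\<^sup>2 = (fst y)\<^sup>2 + (norm (snd y))\<^sup>2"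
    by (simp add: norm_Pair[of "fst y" "snd y", simplified])
  ultimately have "(L * norm (snd y))\<^sup>2 < (fst y)\<^sup>2"
    by (simp add: algebra_simps)
  then show ?thesis using pos by (rule power2_less_imp_less[OF _ less_imp_le])
qed

lemma translate_below_lipschitz_graph:
  fixes \<Gamma> :: "'b::real_normed_vector \<Rightarrow> real"
  assumes lip: "\<And>z w. \<bar>\<Gamma> z - \<Gamma> w\<bar> \<le> L * norm (z - w)"
    and y: "L * norm (snd y) < fst y" and x: "fst x \<le> \<Gamma> (snd x)"
  shows "fst (x - y) < \<Gamma> (snd (x - y))"
  using lip[of "snd x" "snd x - snd y"] y x by simp

lemma open_Omega:
  assumes "continuous_on UNIV \<Gamma>1" "continuous_on UNIV \<Gamma>2"
  shows "open (Omega \<Gamma>1 \<Gamma>2)"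
proof -
  have "continuous_on UNIV (\<lambda>x. \<Gamma>1 (snd x))" "continuous_on UNIV (\<lambda>x. \<Gamma>2 (snd x))"
    by (auto intro: continuous_on_compose2[OF assms(1) continuous_on_snd]
        continuous_on_compose2[OF assms(2) continuous_on_snd])
  then have "open {x. \<Gamma>1 (snd x) < fst x}" "open {x. fst x < \<Gamma>2 (snd x)}"
    by (auto intro!: open_Collect_less continuous_on_fst continuous_on_id)
  moreover have "Omega \<Gamma>1 \<Gamma>2 = {x. \<Gamma>1 (snd x) < fst x} \<inter> {x. fst x < \<Gamma>2 (snd x)}"
    by (auto simp: Omega_def)
  ultimately show ?thesis by auto
qed

lemma famF_le_one:
  assumes "u \<in> famF s \<Gamma>1 \<Gamma>2" shows "u z \<le> 1"
proof -
  have "fst z \<le> \<Gamma>1 (snd z) \<Longrightarrow> u z \<le> 0"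
    and "z \<in> Omega \<Gamma>1 \<Gamma>2 \<or> \<Gamma>2 (snd z) \<le> fst z \<Longrightarrow> u z \<le> 1"
    using assms unfolding famF_def by blast+
  then show ?thesis
    by (cases "fst z \<le> \<Gamma>1 (snd z)"; cases "fst z < \<Gamma>2 (snd z)") (auto simp: Omega_def)
qed

lemma translate_max_zero_mem_famF:
  fixes \<Gamma>1 \<Gamma>2 :: "real^'m::finite \<Rightarrow> real"
  assumes L: "0 < L"
    and lip1: "\<And>z w. \<bar>\<Gamma>1 z - \<Gamma>1 w\<bar> \<le> L * norm (z - w)"
    and lip2: "\<And>z w. \<bar>\<Gamma>2 z - \<Gamma>2 w\<bar> \<le> L * norm (z - w)"
    and y: "L * norm (snd y) < fst y" and u: "u \<in> famF s \<Gamma>1 \<Gamma>2"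
  shows "(\<lambda>z. max (u (z - y)) 0) \<in> famF s \<Gamma>1 \<Gamma>2"
proof -
  let ?\<Omega> = "Omega \<Gamma>1 \<Gamma>2" and ?w = "\<lambda>z. max (u (z - y)) 0"
  have usc: "usc u" and cont: "continuous_on ?\<Omega> u" and sub: "\<forall>x\<in>?\<Omega>. subsol_at s u x"
    and below: "\<And>x. fst x \<le> \<Gamma>1 (snd x) \<Longrightarrow> u x \<le> 0"
    using u by (auto simp: famF_def)
  have "L-lipschitz_on UNIV \<Gamma>1" "L-lipschitz_on UNIV \<Gamma>2"
    using lip1 lip2 L by (auto intro!: lipschitz_onI simp: dist_norm)
  then have open\<Omega>: "open ?\<Omega>" by (intro open_Omega lipschitz_on_continuous_on)
  have pos_in_\<Omega>: "z - y \<in> ?\<Omega>" if "z \<in> ?\<Omega>" "0 < u (z - y)" for z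
  proof -
    have "\<not> fst (z - y) \<le> \<Gamma>1 (snd (z - y))" using below[of "z - y"] that(2) by linarith
    moreover have "fst (z - y) < \<Gamma>2 (snd (z - y))"
      using that(1) by (intro translate_below_lipschitz_graph[OF lip2 y]) (simp add: Omega_def)
    ultimately show ?thesis by (simp add: Omega_def)
  qed
  have "isCont ?w z" if z: "z \<in> ?\<Omega>" for z
  proof (cases "0 < u (z - y)")
    case True
    then have "isCont u (z - y)"
      using cont open\<Omega> pos_in_\<Omega>[OF z] continuous_on_eq_continuous_at by blast
    then have "isCont (\<lambda>v. u (v - y)) z"
      by (intro isCont_o2[where f="\<lambda>v. v - y" and g=u]) simp_all
    then show ?thesis by (rule continuous_max[OF _ continuous_const])
  next
    case False
    then show ?thesis by (intro isCont_max_const_of_usc usc_translate usc) simp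
  qed
  then have "continuous_on ?\<Omega> ?w"
    using open\<Omega> continuous_on_eq_continuous_at by blast
  moreover have "subsol_at s ?w x" if "x \<in> ?\<Omega>" for x
    using that pos_in_\<Omega> sub by (intro subsol_at_max_const subsol_at_translate) auto
  moreover have "?w z \<le> 0" if "fst z \<le> \<Gamma>1 (snd z)" for z
    using below translate_below_lipschitz_graph[OF lip1 y that] by simp
  ultimately show ?thesis
    using famF_le_one[OF u] usc_max_const[OF usc_translate[OF usc]] by (auto simp: famF_def)
qed

theorem proposition4p3:
  fixes s M m L :: real
    and \<Gamma>1 \<Gamma>2 :: "real^'m::finite \<Rightarrow> real"
  assumes s: "1/2 < s" "s < 1"
    and Mm: "0 < m" "m < M"
    and bnd: "\<And>z. 0 \<le> \<Gamma>1 z" "\<And>z. \<Gamma>1 z \<le> \<Gamma>2 z" "\<And>z. \<Gamma>2 z \<le> M"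
      "\<And>z. \<Gamma>2 z - \<Gamma>1 z \<ge> m"
    and reg: "\<exists>C1 d1 d2. (\<forall>z. (\<Gamma>1 has_derivative (\<lambda>h. \<Sum>k\<in>UNIV. d1 k z * h $ k)) (at z))
        \<and> (\<forall>z. (\<Gamma>2 has_derivative (\<lambda>h. \<Sum>k\<in>UNIV. d2 k z * h $ k)) (at z))
        \<and> (\<forall>k z. \<bar>d1 k z\<bar> \<le> C1 \<and> \<bar>d2 k z\<bar> \<le> C1)
        \<and> (\<forall>k z w. \<bar>d1 k z - d1 k w\<bar> \<le> C1 * norm (z - w) \<and> \<bar>d2 k z - d2 k w\<bar> \<le> C1 * norm (z - w))"
    and L: "0 < L" "\<And>z w. \<bar>\<Gamma>1 z - \<Gamma>1 w\<bar> \<le> L * norm (z - w)"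
      "\<And>z w. \<bar>\<Gamma>2 z - \<Gamma>2 w\<bar> \<le> L * norm (z - w)"
  shows "\<forall>x. \<forall>y\<in>Cplus L. Uf s \<Gamma>1 \<Gamma>2 (x + y) \<ge> Uf s \<Gamma>1 \<Gamma>2 x"
proof (intro allI ballI)
  fix x y :: "real \<times> (real^'m)"
  assume "y \<in> Cplus L"
  then have y: "L * norm (snd y) < fst y" by (rule Cplus_fst_gt[OF L(1)])
  let ?F = "famF s \<Gamma>1 \<Gamma>2"
  show "Uf s \<Gamma>1 \<Gamma>2 x \<le> Uf s \<Gamma>1 \<Gamma>2 (x + y)"
  proof (cases "?F = {}")
    case False
    have "(SUP u\<in>?F. u x) \<le> (SUP u\<in>?F. u (x + y))"
    proof (rule cSUP_mono[OF False])
      show "bdd_above ((\<lambda>u. u (x + y)) ` ?F)" by (rule bdd_aboveI2, rule famF_le_one)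
      show "\<exists>v\<in>?F. u x \<le> v (x + y)" if "u \<in> ?F" for u
        using translate_max_zero_mem_famF[OF L y that] by (intro bexI) auto
    qed
    then show ?thesis by (simp add: Uf_def)
  qed (simp add: Uf_def)
qed

end
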